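(* Let $n\geq 4$ and let $3\leq i\leq n-1$. Let $p$ be any permutation of length $n$. Then one of $p$ and $c_i(p)$ has exactly one more alternating run than the other; that is, $|\mathrm{run}(p)-\mathrm{run}(c_i(p))|=1$.
   Context: For a permutation $p=p_1p_2\cdots p_n$ and an index $i\in[2,n-1]$, $p$ changes direction at $i$ if $p_{i-1}<p_i>p_{i+1}$ or $p_{i-1}>p_i<p_{i+1}$. The permutation $p$ has $k$ alternating runs (written $\mathrm{run}(p)=k$) if $p$ changes direction exactly $k-1$ times. For a string $s$ of distinct integers with underlying set $S$, the complement of $s$ relative to $S$ is the string obtained from $s$ by replacing, for each $j$, the $j$th smallest element of $S$ by the $j$th largest element of $S$. For $1\leq i\leq n$, $c_i$ is the map on permutations of length $n$ that leaves $p_1\cdots p_{i-1}$ unchanged and replaces the string $p_ip_{i+1}\cdots p_n$ by its complement relative to its underlying set $\{p_i,\dots,p_n\}$. *)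

theory Defs
  imports Main "HOL-Combinatorics.List_Permutation"
begin

(* Permutations of length n are lists that are permutations of [1..n].
   Positions are 1-based in the paper; "pos p k" is p_k = p ! (k-1). *)
definition pos :: "nat list \<Rightarrow> nat \<Rightarrow> nat" where
  "pos p k = p ! (k - 1)"

definition is_perm :: "nat \<Rightarrow> nat list \<Rightarrow> bool" where
  "is_perm n p \<longleftrightarrow> p <~~> [1..<n+1]"

definition changes_dir :: "nat list \<Rightarrow> nat \<Rightarrow> bool" where
  "changes_dir p i \<longleftrightarrow> 2 \<le> i \<and> i \<le> length p - 1 \<and>
     ((pos p (i-1) < pos p i \<and> pos p i > pos p (i+1)) \<or>
      (pos p (i-1) > pos p i \<and> pos p i < pos p (i+1)))"

definition run :: "nat list \<Rightarrow> nat" where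
  "run p = card {i. changes_dir p i} + 1"

(* complement of a string s of distinct integers relative to its underlying set S:
   the j-th smallest element of S is replaced by the j-th largest element of S *)
definition complement :: "nat list \<Rightarrow> nat list" where
  "complement s = (let L = sorted_list_of_set (set s); k = length L in
     map (\<lambda>x. L ! (k - 1 - card {y \<in> set s. y < x})) s)"

definition c_map :: "nat \<Rightarrow> nat list \<Rightarrow> nat list" where
  "c_map i p = take (i - 1) p @ complement (drop (i - 1) p)"

end

theory Submission
  imports Defs
begin

text \<open>Record the shape of a permutation by its ascents: position \<open>k\<close> is an ascent
  if \<open>p\<^sub>k < p\<^sub>k\<^sub>+\<^sub>1\<close>, and \<open>p\<close> changes direction at \<open>j\<close> iff exactly one of \<open>j - 1\<close>, \<open>j\<close>
  is an ascent. Complementing the suffix \<open>p\<^sub>i \<cdots> p\<^sub>n\<close> reverses all comparisons inside it,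
  so it keeps the ascents \<open>k \<le> i - 2\<close>, negates the ascents \<open>k \<ge> i\<close>, and may or may not change
  the ascent \<open>i - 1\<close>. Direction changes away from \<open>i - 1\<close> and \<open>i\<close> are therefore unaffected;
  at \<open>i - 1\<close> the change status flips iff ascent \<open>i - 1\<close> changed, and at \<open>i\<close> it flips iff
  ascent \<open>i - 1\<close> did not change (ascent \<open>i\<close> is negated in any case). So exactly one
  direction change is gained or lost.\<close>

lemma length_complement [simp]: "length (complement s) = length s"
  by (simp add: complement_def Let_def)

lemma nth_complement:
  "k < length s \<Longrightarrow> complement s ! k =
    sorted_list_of_set (set s) ! (card (set s) - 1 - card {y \<in> set s. y < s ! k})"
  by (simp add: complement_def Let_def)

lemma card_smaller_less_card_set:
  "x \<in> set s \<Longrightarrow> card {y \<in> set s. y < x} < card (set (s :: nat list))"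
  by (rule psubset_card_mono) auto

lemma card_smaller_strict_mono:
  "x \<in> set s \<Longrightarrow> x < x' \<Longrightarrow> card {y \<in> set s. y < x} < card {y \<in> set (s :: nat list). y < x'}"
  by (rule psubset_card_mono) auto

lemma nth_complement_less_iff:
  fixes s :: "nat list"
  assumes "k < length s" "l < length s"
  shows "complement s ! k < complement s ! l \<longleftrightarrow> s ! l < s ! k"
proof -
  let ?L = "sorted_list_of_set (set s)"
  let ?idx = "\<lambda>x. card (set s) - 1 - card {y \<in> set s. y < x}"
  have reversed: "?L ! ?idx x' < ?L ! ?idx x" if "x \<in> set s" "x' \<in> set s" "x < x'" for x x'
  proof (rule sorted_wrt_nth_less[OF strict_sorted_list_of_set])
    show "?idx x' < ?idx x"
      using card_smaller_strict_mono[OF that(1,3)] card_smaller_less_card_set[OF that(2)]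
      by linarith
    show "?idx x < length ?L"
      using card_smaller_less_card_set[OF that(1)] by simp
  qed
  have "s ! k \<in> set s" "s ! l \<in> set s" using assms by simp_all
  with reversed[of "s ! k" "s ! l"] reversed[of "s ! l" "s ! k"] assms show ?thesis
    by (cases "s ! k" "s ! l" rule: linorder_cases) (auto simp: nth_complement)
qed

lemma set_complement_subset: "set (complement s) \<subseteq> set s"
proof
  fix x assume "x \<in> set (complement s)"
  then obtain k where k: "k < length s" "x = complement s ! k"
    by (auto simp: in_set_conv_nth)
  have "card (set s) - 1 - card {y \<in> set s. y < s ! k} < length (sorted_list_of_set (set s))"
    using card_smaller_less_card_set[OF nth_mem[OF k(1)]] by simp
  then have "complement s ! k \<in> set (sorted_list_of_set (set s))"
    using k(1) by (simp only: nth_complement nth_mem)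
  with k(2) show "x \<in> set s" by simp
qed

lemma distinct_complement:
  fixes s :: "nat list"
  assumes "distinct s"
  shows "distinct (complement s)"
proof (rule distinct_conv_nth[THEN iffD2], intro allI impI)
  fix k l assume "k < length (complement s)" "l < length (complement s)" "k \<noteq> l"
  moreover from this assms have "s ! k \<noteq> s ! l" by (simp add: nth_eq_iff_index_eq)
  ultimately show "complement s ! k \<noteq> complement s ! l"
    using nth_complement_less_iff[of k s l] nth_complement_less_iff[of l s k]
    by (auto simp: linorder_neq_iff)
qed

lemma length_c_map [simp]: "length (c_map i p) = length p"
  by (simp add: c_map_def)

lemma distinct_c_map:
  assumes "distinct p"
  shows "distinct (c_map i p)"
proof -
  have "set (take (i - 1) p) \<inter> set (drop (i - 1) p) = {}"
    using assms by (metis append_take_drop_id distinct_append)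
  then show ?thesis
    using assms set_complement_subset[of "drop (i - 1) p"]
    by (auto simp: c_map_def distinct_complement)
qed

definition ascent :: "nat list \<Rightarrow> nat \<Rightarrow> bool" where
  "ascent p k \<longleftrightarrow> pos p k < pos p (k + 1)"

lemma changes_dir_iff_ascent:
  assumes "distinct p"
  shows "changes_dir p j \<longleftrightarrow>
    2 \<le> j \<and> j \<le> length p - 1 \<and> ascent p (j - 1) \<noteq> ascent p j"
proof (cases "2 \<le> j \<and> j \<le> length p - 1")
  case True
  then have "pos p (j - 1) \<noteq> pos p j" "pos p j \<noteq> pos p (j + 1)"
    using assms by (auto simp: pos_def nth_eq_iff_index_eq)
  with True show ?thesis
    by (auto simp: changes_dir_def ascent_def linorder_neq_iff)
qed (auto simp: changes_dir_def)

lemma nth_c_map_prefix: "j + 1 < i \<Longrightarrow> j < length p \<Longrightarrow> c_map i p ! j = p ! j"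
  by (auto simp: c_map_def nth_append)

lemma nth_c_map_suffix:
  "i - 1 \<le> j \<Longrightarrow> j < length p \<Longrightarrow> c_map i p ! j = complement (drop (i - 1) p) ! (j - (i - 1))"
  by (simp add: c_map_def nth_append)

lemma ascent_c_map_prefix:
  assumes "i \<le> length p" "k + 1 < i"
  shows "ascent (c_map i p) k \<longleftrightarrow> ascent p k"
  using assms by (simp add: ascent_def pos_def nth_c_map_prefix)

lemma ascent_c_map_suffix:
  assumes "distinct p" "1 \<le> i" "i \<le> k" "k < length p"
  shows "ascent (c_map i p) k \<longleftrightarrow> \<not> ascent p k"
proof -
  let ?s = "drop (i - 1) p"
  have "ascent (c_map i p) k \<longleftrightarrow> complement ?s ! (k - i) < complement ?s ! (k - (i - 1))"
    using assms by (simp add: ascent_def pos_def nth_c_map_suffix diff_diff_left)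
  also have "\<dots> \<longleftrightarrow> ?s ! (k - (i - 1)) < ?s ! (k - i)"
    using assms by (intro nth_complement_less_iff) auto
  also have "\<dots> \<longleftrightarrow> pos p (k + 1) < pos p k"
    using assms by (simp add: pos_def)
  also have "\<dots> \<longleftrightarrow> \<not> ascent p k"
  proof -
    have "p ! k \<noteq> p ! (k - 1)"
      using assms by (simp add: nth_eq_iff_index_eq)
    then show ?thesis by (auto simp: ascent_def pos_def)
  qed
  finally show ?thesis .
qed

lemma abs_card_diff_eq_1:
  assumes "finite A" "finite B" "{x. (x \<in> A) \<noteq> (x \<in> B)} = {a}"
  shows "\<bar>int (card A) - int (card B)\<bar> = 1"
proof -
  have differ: "(x \<in> A) \<noteq> (x \<in> B) \<longleftrightarrow> x = a" for x
    using assms(3) by (simp add: set_eq_iff)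
  have agree: "A - {a} = B - {a}"
  proof (rule set_eqI)
    show "x \<in> A - {a} \<longleftrightarrow> x \<in> B - {a}" for x
      using differ[of x] by auto
  qed
  show ?thesis
  proof (cases "a \<in> A")
    case True
    with differ[of a] have "a \<notin> B" by simp
    then have "card A = Suc (card B)"
      using card.remove[OF assms(1) True] agree by simp
    then show ?thesis by simp
  next
    case False
    with differ[of a] have "a \<in> B" by simp
    then have "card B = Suc (card A)"
      using card.remove[OF assms(2) \<open>a \<in> B\<close>] agree False by simp
    then show ?thesis by simp
  qed
qed
lemma finite_changes_dir: "finite {j. changes_dir p j}"
  by (rule finite_subset[of _ "{..length p}"]) (auto simp: changes_dir_def)

lemma changes_dir_c_map_differ_iff:
  assumes "distinct p" "3 \<le> i" "i < length p"
  shows "changes_dir p j \<noteq> changes_dir (c_map i p) j \<longleftrightarrow>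
    j = (if ascent (c_map i p) (i - 1) = ascent p (i - 1) then i else i - 1)"
proof -
  define q where "q = c_map i p"
  have "distinct q" "length q = length p"
    using assms by (simp_all add: q_def distinct_c_map)
  note changes_dir_iff_ascent[OF assms(1)] changes_dir_iff_ascent[OF \<open>distinct q\<close>]
  note cd = this[unfolded \<open>length q = length p\<close>]
  have prefix: "ascent q k \<longleftrightarrow> ascent p k" if "k + 1 < i" for k
    using assms that by (simp add: q_def ascent_c_map_prefix)
  have suffix: "ascent q k \<longleftrightarrow> \<not> ascent p k" if "i \<le> k" "k < length p" for k
    using assms that by (simp add: q_def ascent_c_map_suffix)
  consider "j + 1 < i" | "j = i - 1" | "j = i" | "i < j" "j < length p" | "length p \<le> j"
    by linarith
  then have "changes_dir p j \<noteq> changes_dir q j \<longleftrightarrow>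
      j = (if ascent q (i - 1) = ascent p (i - 1) then i else i - 1)"
  proof cases
    case 1
    then show ?thesis using prefix[of "j - 1"] prefix[of j] by (auto simp: cd)
  next
    case 2
    then show ?thesis using assms prefix[of "i - 2"] by (auto simp: cd numeral_2_eq_2)
  next
    case 3
    then show ?thesis using assms suffix[of i] by (auto simp: cd)
  next
    case 4
    then show ?thesis using suffix[of "j - 1"] suffix[of j] by (auto simp: cd)
  next
    case 5
    then show ?thesis using assms by (auto simp: cd)
  qed
  then show ?thesis by (simp only: q_def)
qed

theorem run_c_map:
  assumes "distinct p" "3 \<le> i" "i < length p"
  shows "\<bar>int (run p) - int (run (c_map i p))\<bar> = 1"
proof -
  let ?a = "if ascent (c_map i p) (i - 1) = ascent p (i - 1) then i else i - 1"
  have "{j. (j \<in> {j. changes_dir p j}) \<noteq> (j \<in> {j. changes_dir (c_map i p) j})} = {?a}"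
    using changes_dir_c_map_differ_iff[OF assms] by auto
  then show ?thesis
    unfolding run_def by (simp add: abs_card_diff_eq_1 finite_changes_dir)
qed

theorem mainTheorem1:
  fixes n i :: nat and p :: "nat list"
  assumes "n \<ge> 4" and "3 \<le> i" and "i \<le> n - 1" and "is_perm n p"
  shows "\<bar>int (run p) - int (run (c_map i p))\<bar> = 1"
proof (rule run_c_map)
  have perm: "p <~~> [1..<n+1]" using assms(4) by (simp only: is_perm_def)
  show "distinct p" using perm_distinct_iff[OF perm] by simp
  show "i < length p" using perm_length[OF perm] assms(1,3) by simp
qed (fact assms(2))

end
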